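(* Let $q$ be a prime power and let $\ell_1,\ell_2,\ell_3,\ell_4$ be lines in $\mathrm{PG}(4,q)$ such that (L1) any three of them span $\mathrm{PG}(4,q)$, and (L2) any two of them are skew. Then at most one of the four lines can be obtained by (exact) $(3,1)$-repair from the remaining three lines; here a line $\ell$ is obtained by $(3,1)$-repair from lines $a,b,c$ if there are points $P_a\in a$, $P_b\in b$, $P_c\in c$ with $\ell\subseteq\langle P_a,P_b,P_c\rangle$. *)

theory Defs
  imports "HOL-Analysis.Analysis"
begin

text \<open>PG(4,q) is modelled by the vector space 'a^5 over a finite field 'a (|'a| = q,
  a prime power).  Projective subspaces of projective dimension k are the
  linear subspaces of vector dimension k+1.\<close>

definition pg_point :: "('a::field ^ 5) set \<Rightarrow> bool" where
  "pg_point P \<longleftrightarrow> vec.subspace P \<and> vec.dim P = 1"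

definition pg_line :: "('a::field ^ 5) set \<Rightarrow> bool" where
  "pg_line L \<longleftrightarrow> vec.subspace L \<and> vec.dim L = 2"

definition skew :: "('a::field ^ 5) set \<Rightarrow> ('a ^ 5) set \<Rightarrow> bool" where
  "skew A B \<longleftrightarrow> A \<inter> B = {0}"

definition spans_all3 :: "('a::field ^ 5) set \<Rightarrow> ('a ^ 5) set \<Rightarrow> ('a ^ 5) set \<Rightarrow> bool" where
  "spans_all3 A B C \<longleftrightarrow> vec.span (A \<union> B \<union> C) = UNIV"

definition repair31 ::
  "('a::field ^ 5) set \<Rightarrow> ('a ^ 5) set \<Rightarrow> ('a ^ 5) set \<Rightarrow> ('a ^ 5) set \<Rightarrow> bool" where
  "repair31 L a b c \<longleftrightarrow>
     (\<exists>Pa Pb Pc. pg_point Pa \<and> pg_point Pb \<and> pg_point Pc \<and>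
        Pa \<subseteq> a \<and> Pb \<subseteq> b \<and> Pc \<subseteq> c \<and> L \<subseteq> vec.span (Pa \<union> Pb \<union> Pc))"

definition repairable_from_rest :: "(nat \<Rightarrow> ('a::field ^ 5) set) \<Rightarrow> nat \<Rightarrow> bool" where
  "repairable_from_rest l i \<longleftrightarrow>
     (\<exists>a b c. {a, b, c} = {0..<4} - {i} \<and> a \<noteq> b \<and> a \<noteq> c \<and> b \<noteq> c \<and>
        repair31 (l i) (l a) (l b) (l c))"

end

theory Submission
  imports Defs
begin

text \<open>Suppose two of the lines, A and B, are each repaired from the other three: A from
  points Pb, Pc, Pd on B, C, D and B from points Qa, Qc, Qd on A, C, D. Being skew, A and B
  span a hyperplane H. The plane through Pb, Pc, Pd contains A and the point Pb off A, so it
  is the plane joining A and Pb and lies in H; likewise the plane through Qa, Qc, Qd lies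
  in H. By (L1) the lines C and D are not contained in H, so each meets H in a single
  point, which forces Pc = Qc and Pd = Qd. Now the plane through Pb, Pc, Pd also contains
  Qa, hence the second repair plane and with it B; containing A and B, it contains the
  hyperplane H, which is absurd.\<close>

context finite_dimensional_vector_space
begin

lemma dim_Un_Int:
  assumes "subspace S" "subspace T"
  shows "dim (S \<union> T) + dim (S \<inter> T) = dim S + dim T"
proof -
  have "span S = S" "span T = T"
    using assms by (simp_all add: span_eq_iff)
  then have "span (S \<union> T) = {x + y |x y. x \<in> S \<and> y \<in> T}"
    using span_Un[of S T] by (simp only:)
  then show ?thesis
    using local.dim_sums_Int[OF assms] dim_span[of "S \<union> T"] by simp
qed

lemma dim_Un_le: "dim (S \<union> T) \<le> dim S + dim T"
proof -
  obtain B where B: "B \<subseteq> S" "independent B" "S \<subseteq> span B" "card B = dim S"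
    by (rule basis_exists)
  obtain C where C: "C \<subseteq> T" "independent C" "T \<subseteq> span C" "card C = dim T"
    by (rule basis_exists)
  have "S \<union> T \<subseteq> span (B \<union> C)"
    using B(3) C(3) span_mono[of B "B \<union> C"] span_mono[of C "B \<union> C"] by blast
  moreover have "finite (B \<union> C)"
    using B(2) C(2) local.finiteI_independent by blast
  ultimately have "dim (S \<union> T) \<le> card (B \<union> C)"
    by (rule dim_le_card)
  also have "\<dots> \<le> dim S + dim T"
    using B(4) C(4) card_Un_le[of B C] by simp
  finally show ?thesis .
qed

end

lemma pg_point_subspace: "pg_point P \<Longrightarrow> vec.subspace P"
  and pg_point_dim: "pg_point P \<Longrightarrow> vec.dim P = 1"
  and pg_line_subspace: "pg_line L \<Longrightarrow> vec.subspace L"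
  and pg_line_dim: "pg_line L \<Longrightarrow> vec.dim L = 2"
  by (simp_all add: pg_point_def pg_line_def)

lemma dim_Un_skew:
  assumes "vec.subspace S" "vec.subspace T" "skew S T"
  shows "vec.dim (S \<union> T) = vec.dim S + vec.dim T"
  using vec.dim_Un_Int[OF assms(1,2)] assms(3) by (simp add: skew_def)

lemma skew_sym: "skew A B \<Longrightarrow> skew B A"
  by (auto simp: skew_def)

lemma skew_subset:
  assumes "skew A B" "vec.subspace P" "P \<subseteq> B"
  shows "skew A P"
  using assms vec.subspace_0 by (auto simp: skew_def)

lemma dim_three_points_le:
  assumes "pg_point P" "pg_point Q" "pg_point R"
  shows "vec.dim (P \<union> Q \<union> R) \<le> 3"
  using vec.dim_Un_le[of "P \<union> Q" R] vec.dim_Un_le[of P Q] assms by (simp add: pg_point_dim)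

lemma repair_plane_eq_join:
  assumes "pg_line A" "pg_point P" "pg_point Q" "pg_point R" "skew A P"
    and "A \<subseteq> vec.span (P \<union> Q \<union> R)"
  shows "vec.span (P \<union> Q \<union> R) = vec.span (A \<union> P)"
proof -
  have "vec.dim (A \<union> P) = 3"
    using dim_Un_skew[of A P] assms by (simp add: pg_line_subspace pg_line_dim
        pg_point_subspace pg_point_dim)
  moreover have "A \<union> P \<subseteq> vec.span (P \<union> Q \<union> R)"
    using assms(6) vec.span_superset[of "P \<union> Q \<union> R"] by blast
  ultimately have "vec.span (A \<union> P) = vec.span (vec.span (P \<union> Q \<union> R))"
    using dim_three_points_le[OF assms(2-4)] by (intro vec.dim_eq_span) simp_all
  then show ?thesis by (simp add: vec.span_span)
qed

lemma repair_points_subset_join: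
  assumes "pg_line A" "skew A B" "pg_point P" "pg_point Q" "pg_point R" "P \<subseteq> B"
    and "A \<subseteq> vec.span (P \<union> Q \<union> R)"
  shows "P \<union> Q \<union> R \<subseteq> vec.span (A \<union> B)"
proof -
  have "skew A P"
    using skew_subset[OF assms(2) pg_point_subspace[OF assms(3)] assms(6)] .
  have "P \<union> Q \<union> R \<subseteq> vec.span (P \<union> Q \<union> R)"
    by (rule vec.span_superset)
  also have "\<dots> = vec.span (A \<union> P)"
    by (rule repair_plane_eq_join[OF assms(1,3-5) \<open>skew A P\<close> assms(7)])
  also have "\<dots> \<subseteq> vec.span (A \<union> B)"
    using assms(6) by (intro vec.span_mono) blast
  finally show ?thesis .
qed

lemma skew_lines_join_dim:
  assumes "pg_line A" "pg_line B" "skew A B"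
  shows "vec.dim (A \<union> B) = 4"
  using dim_Un_skew[of A B] assms by (simp add: pg_line_subspace pg_line_dim)

lemma line_meets_hyperplane_in_point:
  fixes H :: "('a::field ^ 5) set"
  assumes "pg_line C" "vec.subspace H" "vec.dim H = 4" "vec.span (C \<union> H) = UNIV"
    and "pg_point P" "P \<subseteq> C" "P \<subseteq> H"
  shows "P = C \<inter> H"
proof (rule vec.subspace_dim_equal)
  have "vec.dim (C \<union> H) = 5"
    using assms(4) vec.dim_span[of "C \<union> H"] vec_dim_card[where 'a='a and 'n=5] by simp
  then show "vec.dim (C \<inter> H) \<le> vec.dim P"
    using vec.dim_Un_Int[of C H] assms by (simp add: pg_line_subspace pg_line_dim pg_point_dim)
qed (use assms in \<open>auto simp: pg_point_subspace pg_line_subspace vec.subspace_inter\<close>)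

lemma spans_all3_join:
  assumes "spans_all3 A B C"
  shows "vec.span (C \<union> vec.span (A \<union> B)) = UNIV"
proof -
  have "A \<union> B \<union> C \<subseteq> vec.span (C \<union> vec.span (A \<union> B))"
    using vec.span_superset[of "A \<union> B"] vec.span_superset[of "C \<union> vec.span (A \<union> B)"] by blast
  then have "vec.span (A \<union> B \<union> C) \<subseteq> vec.span (C \<union> vec.span (A \<union> B))"
    by (simp add: vec.span_minimal)
  then show ?thesis
    using assms by (auto simp: spans_all3_def)
qed

lemma not_mutually_repairable:
  assumes lines: "pg_line A" "pg_line B" "pg_line C" "pg_line D"
    and "skew A B" "spans_all3 A B C" "spans_all3 A B D"
    and "repair31 A B C D"
  shows "\<not> repair31 B A C D"
proof
  assume "repair31 B A C D"
  then obtain Qa Qc Qd where Q: "pg_point Qa" "pg_point Qc" "pg_point Qd"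
    "Qa \<subseteq> A" "Qc \<subseteq> C" "Qd \<subseteq> D" "B \<subseteq> vec.span (Qa \<union> Qc \<union> Qd)"
    unfolding repair31_def by blast
  obtain Pb Pc Pd where P: "pg_point Pb" "pg_point Pc" "pg_point Pd"
    "Pb \<subseteq> B" "Pc \<subseteq> C" "Pd \<subseteq> D" "A \<subseteq> vec.span (Pb \<union> Pc \<union> Pd)"
    using \<open>repair31 A B C D\<close> unfolding repair31_def by blast
  define H where "H = vec.span (A \<union> B)"
  have "vec.subspace H" "vec.dim H = 4"
    unfolding H_def using skew_lines_join_dim[OF lines(1,2) \<open>skew A B\<close>] by simp_all
  have P_H: "Pb \<union> Pc \<union> Pd \<subseteq> H"
    unfolding H_def by (rule repair_points_subset_join[OF lines(1) \<open>skew A B\<close> P(1-4,7)])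
  have Q_H: "Qa \<union> Qc \<union> Qd \<subseteq> H"
    unfolding H_def Un_commute[of A B]
    by (rule repair_points_subset_join[OF lines(2) skew_sym[OF \<open>skew A B\<close>] Q(1-4,7)])
  have C_H: "vec.span (C \<union> H) = UNIV" and D_H: "vec.span (D \<union> H) = UNIV"
    unfolding H_def by (rule spans_all3_join, fact)+
  note meets_H = line_meets_hyperplane_in_point[OF _ \<open>vec.subspace H\<close> \<open>vec.dim H = 4\<close>]
  have "Pc = C \<inter> H" "Qc = C \<inter> H" "Pd = D \<inter> H" "Qd = D \<inter> H"
    using P_H Q_H
    by (auto intro!: meets_H[OF lines(3) C_H P(2,5)] meets_H[OF lines(3) C_H Q(2,5)]
        meets_H[OF lines(4) D_H P(3,6)] meets_H[OF lines(4) D_H Q(3,6)])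
  then have "Qa \<union> Qc \<union> Qd \<subseteq> vec.span (Pb \<union> Pc \<union> Pd)"
    using Q(4) P(7) vec.span_superset[of "Pb \<union> Pc \<union> Pd"] by blast
  then have "vec.span (Qa \<union> Qc \<union> Qd) \<subseteq> vec.span (Pb \<union> Pc \<union> Pd)"
    by (rule vec.span_minimal) simp
  then have "A \<union> B \<subseteq> vec.span (Pb \<union> Pc \<union> Pd)"
    using P(7) Q(7) by blast
  then have "vec.dim (A \<union> B) \<le> vec.dim (Pb \<union> Pc \<union> Pd)"
    by (rule vec.dim_mono)
  then show False
    using skew_lines_join_dim[OF lines(1,2) \<open>skew A B\<close>] dim_three_points_le[OF P(1-3)] by simp
qed

lemma repair31_permute:
  assumes "repair31 L (l a) (l b) (l c)" "distinct [a, b, c]" "{a', b', c'} = {a, b, c}"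
  shows "repair31 L (l a') (l b') (l c')"
proof -
  obtain Pa Pb Pc where P: "pg_point Pa" "pg_point Pb" "pg_point Pc"
    "Pa \<subseteq> l a" "Pb \<subseteq> l b" "Pc \<subseteq> l c" "L \<subseteq> vec.span (Pa \<union> Pb \<union> Pc)"
    using assms(1) unfolding repair31_def by blast
  define f where "f x = (if x = a then Pa else if x = b then Pb else Pc)" for x
  have f: "pg_point (f x) \<and> f x \<subseteq> l x" if "x \<in> {a, b, c}" for x
    using P that assms(2) by (auto simp: f_def)
  have "f a' \<union> f b' \<union> f c' = \<Union> (f ` {a', b', c'})"
    by auto
  also have "\<dots> = Pa \<union> Pb \<union> Pc"
    using assms(2,3) by (auto simp: f_def)
  finally show ?thesis
    unfolding repair31_def using f assms(3) P(7) by (metis insertCI)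
qed

lemma repairable_from_rest_repair31:
  assumes "repairable_from_rest l i" "{a, b, c} = {0..<4} - {i}"
  shows "repair31 (l i) (l a) (l b) (l c)"
proof -
  obtain a0 b0 c0 where "{a0, b0, c0} = {0..<4} - {i}" "distinct [a0, b0, c0]"
    and "repair31 (l i) (l a0) (l b0) (l c0)"
    using assms(1) unfolding repairable_from_rest_def by auto
  then show ?thesis
    using repair31_permute[of "l i" l a0 b0 c0 a b c] assms(2) by simp
qed

lemma remaining_two_indices:
  fixes i j :: nat
  assumes "i < 4" "j < 4" "i \<noteq> j"
  obtains k m where "{0..<4} - {i} = {j, k, m}" "{0..<4} - {j} = {i, k, m}"
    "k < 4" "m < 4" "i \<noteq> k" "j \<noteq> k" "i \<noteq> m" "j \<noteq> m"
proof -
  have "card ({0..<4::nat} - {i, j}) = 2"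
    using assms by (simp add: card_Diff_subset)
  then obtain k m where km: "{0..<4::nat} - {i, j} = {k, m}"
    by (auto simp: card_2_iff)
  then have "k \<in> {0..<4} - {i, j}" "m \<in> {0..<4} - {i, j}"
    by simp_all
  have complements: "{0..<4} - {i} = insert j ({0..<4} - {i, j})"
    "{0..<4} - {j} = insert i ({0..<4} - {i, j})"
    using assms by auto
  show thesis
  proof (rule that)
    show "{0..<4} - {i} = {j, k, m}" "{0..<4} - {j} = {i, k, m}"
      using complements km by simp_all
    show "k < 4" "m < 4" "i \<noteq> k" "j \<noteq> k" "i \<noteq> m" "j \<noteq> m"
      using \<open>k \<in> {0..<4} - {i, j}\<close> \<open>m \<in> {0..<4} - {i, j}\<close> by auto
  qed
qed

theorem mainTheorem5:
  fixes l :: "nat \<Rightarrow> ('a::{field,finite} ^ 5) set"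
  assumes lines: "\<And>i. i < 4 \<Longrightarrow> pg_line (l i)"
    and L1: "\<And>i j k. i < 4 \<Longrightarrow> j < 4 \<Longrightarrow> k < 4 \<Longrightarrow> i \<noteq> j \<Longrightarrow> i \<noteq> k \<Longrightarrow> j \<noteq> k \<Longrightarrow>
               spans_all3 (l i) (l j) (l k)"
    and L2: "\<And>i j. i < 4 \<Longrightarrow> j < 4 \<Longrightarrow> i \<noteq> j \<Longrightarrow> skew (l i) (l j)"
  shows "card {i. i < 4 \<and> repairable_from_rest l i} \<le> 1"
proof -
  have "i = j" if ij: "i < 4" "j < 4"
    and repairable: "repairable_from_rest l i" "repairable_from_rest l j" for i j
  proof (rule ccontr)
    assume "i \<noteq> j"
    then obtain k m where km: "{0..<4} - {i} = {j, k, m}" "{0..<4} - {j} = {i, k, m}"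
      "k < 4" "m < 4" "i \<noteq> k" "j \<noteq> k" "i \<noteq> m" "j \<noteq> m"
      by (rule remaining_two_indices[OF ij])
    have "repair31 (l i) (l j) (l k) (l m)" "repair31 (l j) (l i) (l k) (l m)"
      using repairable_from_rest_repair31[OF repairable(1)]
        repairable_from_rest_repair31[OF repairable(2)] km(1,2)
      by simp_all
    then show False
      using not_mutually_repairable[OF lines[OF ij(1)] lines[OF ij(2)] lines[OF km(3)]
          lines[OF km(4)] L2[OF ij \<open>i \<noteq> j\<close>]
          L1[OF ij km(3) \<open>i \<noteq> j\<close> km(5,6)] L1[OF ij km(4) \<open>i \<noteq> j\<close> km(7,8)]]
      by blast
  qed
  then show ?thesis
    using card_le_Suc0_iff_eq[of "{i. i < 4 \<and> repairable_from_rest l i}"] by auto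
qed

end
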